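(* Let $\mathbb{F}$ be a field, $\Gamma$ a finite abelian group written multiplicatively with unit $e$, and $M_1,M_2$ $\mathbb{F}$-representable matroids on a common ground set $E$ of the same rank $r$, with $A_k$ an $r\times E$ matrix over $\mathbb{F}$ representing $M_k$ ($k=1,2$). Let $\psi\colon E\to\Gamma$ be a labeling, let $D_\psi$ be the $E\times E$ diagonal matrix whose $(j,j)$ entry is $x_j\psi(j)$, where $\{x_j\}_{j\in E}$ are indeterminates, viewed as a matrix over the group ring $\mathbb{F}(\{x_j\}_{j\in E})[\Gamma]$, and let $\Xi:=A_1D_\psi A_2^\top$. Then for each $g\in\Gamma$, the coefficient of $g$ in $\det(\Xi)$ is a non-zero polynomial in $\{x_j\}_{j\in E}$ if and only if $M_1$ and $M_2$ have a common basis $B$ with $\prod_{j\in B}\psi(j)=g$.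
   Context: $A_k$ represents $M_k$ means the bases of $M_k$ are exactly the sets of columns forming a basis of the column space. The group ring $R[\Gamma]$ over a commutative ring $R$ is the set of formal sums $\sum_{g\in\Gamma}a_g g$ with $a_g\in R$, with the natural addition and multiplication $(\sum a_g g)(\sum b_h h)=\sum a_g b_h\,gh$; the coefficient of $g$ in $\det(\Xi)$ lies in $\mathbb{F}[\{x_j\}]$. *)

theory Defs
  imports "HOL-Analysis.Analysis" "HOL-Library.Poly_Mapping"
begin

text \<open>A matroid on the (finite) ground set UNIV of type 'e, given by its set of bases.\<close>
definition matroid_bases :: "'e set set \<Rightarrow> bool" where
  "matroid_bases Bs \<longleftrightarrow> Bs \<noteq> {} \<and>
     (\<forall>B1\<in>Bs. \<forall>B2\<in>Bs. \<forall>x\<in>B1 - B2. \<exists>y\<in>B2 - B1. insert y (B1 - {x}) \<in> Bs)"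

definition matroid_has_rank :: "'e set set \<Rightarrow> nat \<Rightarrow> bool" where
  "matroid_has_rank Bs r \<longleftrightarrow> (\<forall>B\<in>Bs. card B = r)"

definition column_basis :: "'a::field ^ 'e ^ 'r \<Rightarrow> 'e set \<Rightarrow> bool" where
  "column_basis A B \<longleftrightarrow> inj_on (\<lambda>j. column j A) B \<and>
     vec.independent ((\<lambda>j. column j A) ` B) \<and>
     vec.span ((\<lambda>j. column j A) ` B) = vec.span (columns A)"

definition represents :: "'a::field ^ 'e ^ 'r \<Rightarrow> 'e set set \<Rightarrow> bool" where
  "represents A Bs \<longleftrightarrow> Bs = {B. column_basis A B}"

type_synonym ('e, 'a) mpoly = "('e \<Rightarrow>\<^sub>0 nat) \<Rightarrow>\<^sub>0 'a"

definition mp_var :: "'e \<Rightarrow> ('e, 'a::{zero,one}) mpoly" where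
  "mp_var j = Poly_Mapping.single (Poly_Mapping.single j 1) 1"

definition mp_const :: "'a::zero \<Rightarrow> ('e, 'a) mpoly" where
  "mp_const c = Poly_Mapping.single 0 c"

text \<open>Group ring R[Gamma], Gamma written additively: element g is (single g 1).\<close>
definition gr_const :: "'a::field \<Rightarrow> ('g::zero \<Rightarrow>\<^sub>0 ('e, 'a) mpoly)" where
  "gr_const c = Poly_Mapping.single 0 (mp_const c)"

definition gr_matrix :: "'a::field ^ 'n ^ 'm \<Rightarrow> ('g::zero \<Rightarrow>\<^sub>0 ('e, 'a) mpoly) ^ 'n ^ 'm" where
  "gr_matrix A = (\<chi> i j. gr_const (A $ i $ j))"

definition D_psi :: "('e \<Rightarrow> 'g::zero) \<Rightarrow> ('g \<Rightarrow>\<^sub>0 ('e, 'a::field) mpoly) ^ 'e ^ 'e" where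
  "D_psi \<psi> = (\<chi> i j. if i = j then Poly_Mapping.single (\<psi> j) (mp_var j) else 0)"

definition Xi_matrix ::
  "'a::field ^ 'e::finite ^ 'r \<Rightarrow> 'a ^ 'e ^ 'r \<Rightarrow> ('e \<Rightarrow> 'g::comm_monoid_add)
     \<Rightarrow> ('g \<Rightarrow>\<^sub>0 ('e, 'a) mpoly) ^ 'r ^ 'r" where
  "Xi_matrix A1 A2 \<psi> = gr_matrix A1 ** D_psi \<psi> ** transpose (gr_matrix A2)"

end

theory Submission
  imports Defs
begin

text \<open>
  Multiplying out \<open>\<Xi> = A\<^sub>1 D\<^sub>\<psi> A\<^sub>2\<^sup>T\<close> and expanding the determinant writes \<open>det \<Xi>\<close> as a sum
  over maps \<open>f : [r] \<rightarrow> E\<close> of \<open>(\<Prod>\<^sub>i A\<^sub>1[i, f i]) \<cdot> det A\<^sub>2[f] \<cdot> (\<Prod>\<^sub>i x\<^bsub>f i\<^esub>) \<cdot> (\<Sum>\<^sub>i \<psi>(f i))\<close>,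
  where \<open>A[f]\<close> is the square matrix with columns \<open>f 1, \<dots>, f r\<close>. Non-injective \<open>f\<close> contribute
  nothing, and an injective \<open>f\<close> is determined by its monomial up to a permutation of \<open>[r]\<close>.
  Collecting the maps with a common image \<open>B\<close> is the Cauchy-Binet argument, graded by \<open>\<Gamma>\<close>:
  the coefficient of \<open>(\<Prod>\<^sub>j\<^sub>\<in>\<^sub>B x\<^sub>j) \<cdot> g\<close> is \<open>det A\<^sub>1[B] \<cdot> det A\<^sub>2[B]\<close> if \<open>\<Sum>\<^sub>j\<^sub>\<in>\<^sub>B \<psi>(j) = g\<close> and \<open>0\<close>
  otherwise. Distinct \<open>B\<close> give distinct monomials, so nothing cancels, and \<open>det A\<^sub>k[B] \<noteq> 0\<close>
  exactly when \<open>B\<close> is a basis of \<open>M\<^sub>k\<close>.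
\<close>

definition select_columns :: "'a ^ 'e ^ 'r \<Rightarrow> ('l \<Rightarrow> 'e) \<Rightarrow> 'a ^ 'l ^ 'r" where
  "select_columns A f = (\<chi> i l. A $ i $ f l)"

lemma columns_select_columns: "columns (select_columns A f) = (\<lambda>j. column j A) ` range f"
  by (auto simp: columns_def column_def select_columns_def)

lemma det_neq_0_iff_span_columns:
  fixes N :: "'a::field ^ 'n ^ 'n"
  shows "det N \<noteq> 0 \<longleftrightarrow> vec.span (columns N) = UNIV"
  by (simp flip: invertible_det_nz add: invertible_right_inverse matrix_right_invertible_span_columns)

lemma det_select_columns_neq_0_iff_column_basis:
  fixes A :: "'a::field ^ 'e::finite ^ 'r::finite" and f :: "'r \<Rightarrow> 'e"
  assumes "inj f"
  shows "det (select_columns A f) \<noteq> 0 \<longleftrightarrow> column_basis A (range f)"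
proof -
  let ?C = "(\<lambda>j. column j A) ` range f"
  have card_range: "card (range f) = vec.dim (UNIV :: ('a ^ 'r) set)"
    using assms by (simp add: card_image card_cart_basis)
  have span_columns_A: "vec.span (columns A) = UNIV" if "vec.span ?C = UNIV"
    using vec.span_mono[of ?C "columns A"] that by (auto simp: columns_def)
  show ?thesis
  proof
    assume "det (select_columns A f) \<noteq> 0"
    then have span: "vec.span ?C = UNIV"
      by (simp add: det_neq_0_iff_span_columns columns_select_columns)
    then have "vec.dim (UNIV :: ('a ^ 'r) set) \<le> card ?C"
      using vec.span_card_ge_dim[of ?C UNIV] by simp
    then have card_C: "card ?C = card (range f)"
      using card_image_le[of "range f" "\<lambda>j. column j A"] card_range by simp
    then have "inj_on (\<lambda>j. column j A) (range f)"
      by (simp add: eq_card_imp_inj_on)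
    moreover have "vec.independent ?C"
      using vec.card_le_dim_spanning[of ?C UNIV] span card_C card_range by simp
    ultimately show "column_basis A (range f)"
      unfolding column_basis_def using span span_columns_A by simp
  next
    assume basis: "column_basis A (range f)"
    then have "card ?C = vec.dim (UNIV :: ('a ^ 'r) set)"
      using card_range by (simp add: column_basis_def card_image)
    moreover have "vec.independent ?C"
      using basis by (simp add: column_basis_def)
    ultimately have "vec.span ?C = UNIV"
      using vec.card_eq_dim[of ?C UNIV] by auto
    then show "det (select_columns A f) \<noteq> 0"
      by (simp add: det_neq_0_iff_span_columns columns_select_columns)
  qed
qed

lemma det_select_columns_eq_0:
  fixes A :: "'a::field ^ 'e ^ 'r::finite" and f :: "'r \<Rightarrow> 'e"
  assumes "\<not> inj f"
  shows "det (select_columns A f) = 0"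
proof -
  from assms obtain a b where "a \<noteq> b" "f a = f b"
    by (auto simp: inj_def)
  then show ?thesis
    by (intro det_identical_columns[of a b]) (auto simp: column_def select_columns_def)
qed

lemma det_select_columns_comp_permutes:
  fixes A :: "'a::comm_ring_1 ^ 'e ^ 'r::finite" and f :: "'r \<Rightarrow> 'e"
  assumes "p permutes UNIV"
  shows "det (select_columns A (f \<circ> p)) = of_int (sign p) * det (select_columns A f)"
proof -
  have "transpose (select_columns A (f \<circ> p)) = (\<chi> i. transpose (select_columns A f) $ p i)"
    by (simp add: vec_eq_iff transpose_def select_columns_def)
  then show ?thesis
    using det_permute_rows[OF assms, of "transpose (select_columns A f)"]
    by (metis det_transpose)
qed

lemma prod_single:
  fixes k :: "'i \<Rightarrow> 'k::comm_monoid_add" and v :: "'i \<Rightarrow> 'v::comm_semiring_1"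
  assumes "finite I"
  shows "(\<Prod>i\<in>I. Poly_Mapping.single (k i) (v i)) = Poly_Mapping.single (\<Sum>i\<in>I. k i) (\<Prod>i\<in>I. v i)"
  using assms by (induction I rule: finite_induct) (simp_all add: mult_single)

definition label_sum :: "('e \<Rightarrow> 'g::comm_monoid_add) \<Rightarrow> ('r::finite \<Rightarrow> 'e) \<Rightarrow> 'g" where
  "label_sum \<psi> f = (\<Sum>i\<in>UNIV. \<psi> (f i))"

definition monomial_of :: "('r::finite \<Rightarrow> 'e) \<Rightarrow> 'e \<Rightarrow>\<^sub>0 nat" where
  "monomial_of f = (\<Sum>i\<in>UNIV. Poly_Mapping.single (f i) 1)"

lemma Xi_matrix_entry:
  fixes A1 A2 :: "'a::field ^ 'e::finite ^ 'r::finite" and \<psi> :: "'e \<Rightarrow> 'g::comm_monoid_add"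
  shows "Xi_matrix A1 A2 \<psi> $ i $ k =
    (\<Sum>j\<in>UNIV. Poly_Mapping.single (\<psi> j) (Poly_Mapping.single (Poly_Mapping.single j 1) (A1$i$j * A2$k$j)))"
proof -
  have "(gr_matrix A1 ** D_psi \<psi>) $ i $ j =
      Poly_Mapping.single (\<psi> j) (Poly_Mapping.single (Poly_Mapping.single j 1) (A1$i$j))" for j
    unfolding matrix_matrix_mult_def gr_matrix_def D_psi_def
    by (simp add: if_distrib[of "\<lambda>x. _ * x"] gr_const_def mp_const_def mp_var_def mult_single cong: if_cong)
  then show ?thesis
    unfolding Xi_matrix_def matrix_matrix_mult_def[of "gr_matrix A1 ** D_psi \<psi>"]
    by (simp add: transpose_def gr_matrix_def gr_const_def mp_const_def mult_single)
qed

lemma prod_Xi_matrix_entries: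
  fixes A1 A2 :: "'a::field ^ 'e::finite ^ 'r::finite" and \<psi> :: "'e \<Rightarrow> 'g::comm_monoid_add"
  shows "(\<Prod>i\<in>UNIV. Xi_matrix A1 A2 \<psi> $ i $ \<sigma> i) =
    (\<Sum>f\<in>UNIV. Poly_Mapping.single (label_sum \<psi> f) (Poly_Mapping.single (monomial_of f)
        (\<Prod>i\<in>UNIV. A1$i$f i * A2$\<sigma> i$f i)))"
  unfolding Xi_matrix_entry
  by (simp add: prod_sum_PiE PiE_UNIV_domain prod_single label_sum_def monomial_of_def)

lemma lookup_det_Xi_matrix:
  fixes A1 A2 :: "'a::field ^ 'e::finite ^ 'r::finite" and \<psi> :: "'e \<Rightarrow> 'g::comm_monoid_add"
  shows "Poly_Mapping.lookup (Poly_Mapping.lookup (det (Xi_matrix A1 A2 \<psi>)) g) m =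
    (\<Sum>f\<in>UNIV. if label_sum \<psi> f = g \<and> monomial_of f = m
               then (\<Prod>i\<in>UNIV. A1$i$f i) * det (select_columns A2 f) else 0)"
proof -
  let ?P = "{p. p permutes (UNIV::'r set)}"
  let ?term = "\<lambda>\<sigma> f. of_int (sign \<sigma>) * (\<Prod>i\<in>UNIV. A1$i$f i * A2$\<sigma> i$f i)"
  have sign_times_single: "(of_int z :: 'g \<Rightarrow>\<^sub>0 ('e, 'a) mpoly) * Poly_Mapping.single a (Poly_Mapping.single b c)
       = Poly_Mapping.single a (Poly_Mapping.single b (of_int z * c))" for z a b c
  proof -
    have "(of_int z :: 'g \<Rightarrow>\<^sub>0 ('e, 'a) mpoly) = Poly_Mapping.single 0 (Poly_Mapping.single 0 (of_int z))"
      by simp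
    then show ?thesis
      by (simp only: mult_single add_0_left)
  qed
  have det_A2: "(\<Sum>\<sigma>\<in>?P. ?term \<sigma> f) = (\<Prod>i\<in>UNIV. A1$i$f i) * det (select_columns A2 f)" for f
    unfolding det_transpose[of "select_columns A2 f", symmetric]
    by (simp add: det_def transpose_def select_columns_def prod.distrib sum_distrib_left mult_ac)
  have "Poly_Mapping.lookup (Poly_Mapping.lookup (det (Xi_matrix A1 A2 \<psi>)) g) m =
     (\<Sum>\<sigma>\<in>?P. \<Sum>f\<in>UNIV. if label_sum \<psi> f = g \<and> monomial_of f = m then ?term \<sigma> f else 0)"
    unfolding det_def prod_Xi_matrix_entries
    by (simp add: sum_distrib_left sign_times_single lookup_sum lookup_single when_def
        if_distrib[of "\<lambda>x. Poly_Mapping.lookup x m"] if_if_eq_conj cong: if_cong)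
  also have "\<dots> = (\<Sum>f\<in>UNIV. if label_sum \<psi> f = g \<and> monomial_of f = m then \<Sum>\<sigma>\<in>?P. ?term \<sigma> f else 0)"
    by (subst sum.swap) (rule sum.cong; auto)
  finally show ?thesis
    by (simp only: det_A2)
qed

lemma label_sum_inj:
  assumes "inj f"
  shows "label_sum \<psi> f = (\<Sum>j\<in>range f. \<psi> j)"
  using sum.reindex[OF assms, of \<psi>] by (simp add: label_sum_def)

lemma lookup_monomial_of_inj:
  assumes "inj f"
  shows "Poly_Mapping.lookup (monomial_of f) x = (if x \<in> range f then 1 else 0)"
proof -
  have "monomial_of f = (\<Sum>j\<in>range f. Poly_Mapping.single j 1)"
    using sum.reindex[OF assms, of "\<lambda>j. Poly_Mapping.single j (1::nat)"] by (simp add: monomial_of_def)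
  then show ?thesis
    by (simp add: lookup_sum lookup_single when_def)
qed

lemma monomial_of_eq_iff:
  assumes "inj f" "inj f'"
  shows "monomial_of f = monomial_of f' \<longleftrightarrow> range f = range f'"
proof
  assume "monomial_of f = monomial_of f'"
  then show "range f = range f'"
    using assms by (metis (full_types) lookup_monomial_of_inj one_neq_zero subsetI subset_antisym)
next
  assume "range f = range f'"
  then show "monomial_of f = monomial_of f'"
    using assms by (intro poly_mapping_eqI) (simp add: lookup_monomial_of_inj)
qed

lemma bij_betw_comp_permutes:
  fixes f :: "'r::finite \<Rightarrow> 'e"
  assumes "inj f"
  shows "bij_betw (\<lambda>p. f \<circ> p) {p. p permutes UNIV} {f'. inj f' \<and> range f' = range f}"
proof (rule bij_betwI')
  show "f \<circ> p = f \<circ> q \<longleftrightarrow> p = q" for p q :: "'r \<Rightarrow> 'r"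
    using assms by (auto simp: fun_eq_iff inj_def)
  show "f \<circ> p \<in> {f'. inj f' \<and> range f' = range f}" if "p \<in> {p. p permutes UNIV}" for p
  proof -
    have "p permutes UNIV"
      using that by simp
    then have "inj p" "range p = UNIV"
      by (simp_all add: permutes_inj permutes_image)
    then show ?thesis
      using assms image_image[of f p UNIV] by (simp add: inj_compose)
  qed
  show "\<exists>p\<in>{p. p permutes UNIV}. f' = f \<circ> p" if "f' \<in> {f'. inj f' \<and> range f' = range f}" for f'
  proof
    have "inj (inv f \<circ> f')"
      using that by (auto intro!: comp_inj_on inj_on_inv_into)
    then have "bij (inv f \<circ> f')"
      unfolding bij_def using finite_UNIV_inj_surj[OF finite_class.finite_UNIV] by blast
    then show "inv f \<circ> f' \<in> {p. p permutes UNIV}"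
      by (auto intro: bij_imp_permutes)
    have "f' x \<in> range f" for x
      using that by auto
    then show "f' = f \<circ> (inv f \<circ> f')"
      by (simp add: fun_eq_iff f_inv_into_f)
  qed
qed

lemma lookup_det_Xi_matrix_monomial:
  fixes A1 A2 :: "'a::field ^ 'e::finite ^ 'r::finite" and \<psi> :: "'e \<Rightarrow> 'g::comm_monoid_add"
    and f :: "'r \<Rightarrow> 'e"
  assumes "inj f"
  shows "Poly_Mapping.lookup (Poly_Mapping.lookup (det (Xi_matrix A1 A2 \<psi>)) g) (monomial_of f) =
    (if label_sum \<psi> f = g then det (select_columns A1 f) * det (select_columns A2 f) else 0)"
proof -
  let ?S = "{f'. inj f' \<and> range f' = range f}"
  let ?P = "{p. p permutes (UNIV::'r set)}"
  let ?T = "\<lambda>f'. if label_sum \<psi> f' = g \<and> monomial_of f' = monomial_of f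
                  then (\<Prod>i\<in>UNIV. A1$i$f' i) * det (select_columns A2 f') else 0"
  have "?T f' = 0" if "f' \<notin> ?S" for f'
  proof (cases "inj f'")
    case True
    with that assms have "monomial_of f' \<noteq> monomial_of f"
      by (simp add: monomial_of_eq_iff)
    then show ?thesis by simp
  qed (simp add: det_select_columns_eq_0)
  then have "(\<Sum>f'\<in>UNIV. ?T f') = (\<Sum>f'\<in>?S. ?T f')"
    by (intro sum.mono_neutral_right) auto
  also have "\<dots> = (\<Sum>p\<in>?P. ?T (f \<circ> p))"
    by (rule sum.reindex_bij_betw[OF bij_betw_comp_permutes[OF assms], symmetric])
  also have "\<dots> = (\<Sum>p\<in>?P. if label_sum \<psi> f = g
      then of_int (sign p) * (\<Prod>i\<in>UNIV. A1$i$f (p i)) * det (select_columns A2 f) else 0)"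
  proof (rule sum.cong[OF refl])
    fix p assume p: "p \<in> ?P"
    then have "inj (f \<circ> p)" "range (f \<circ> p) = range f"
      using bij_betw_apply[OF bij_betw_comp_permutes[OF assms]] by auto
    then have "label_sum \<psi> (f \<circ> p) = label_sum \<psi> f" "monomial_of (f \<circ> p) = monomial_of f"
      using assms by (simp_all add: label_sum_inj monomial_of_eq_iff)
    then show "?T (f \<circ> p) = (if label_sum \<psi> f = g
        then of_int (sign p) * (\<Prod>i\<in>UNIV. A1$i$f (p i)) * det (select_columns A2 f) else 0)"
      using det_select_columns_comp_permutes[of p A2 f] p by (simp add: mult_ac)
  qed
  also have "\<dots> = (if label_sum \<psi> f = g then det (select_columns A1 f) * det (select_columns A2 f) else 0)"
    by (simp add: det_def select_columns_def sum_distrib_right)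
  finally show ?thesis
    by (simp only: lookup_det_Xi_matrix)
qed

lemma lookup_det_Xi_matrix_neq_0_iff:
  fixes A1 A2 :: "'a::field ^ 'e::finite ^ 'r::finite" and \<psi> :: "'e \<Rightarrow> 'g::comm_monoid_add"
  shows "Poly_Mapping.lookup (det (Xi_matrix A1 A2 \<psi>)) g \<noteq> 0 \<longleftrightarrow>
    (\<exists>f. inj f \<and> label_sum \<psi> f = g \<and> det (select_columns A1 f) \<noteq> 0 \<and> det (select_columns A2 f) \<noteq> 0)"
proof
  assume "Poly_Mapping.lookup (det (Xi_matrix A1 A2 \<psi>)) g \<noteq> 0"
  then obtain m where m: "Poly_Mapping.lookup (Poly_Mapping.lookup (det (Xi_matrix A1 A2 \<psi>)) g) m \<noteq> 0"
    by (metis lookup_zero poly_mapping_eqI)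
  then obtain f where "(if label_sum \<psi> f = g \<and> monomial_of f = m
      then (\<Prod>i\<in>UNIV. A1$i$f i) * det (select_columns A2 f) else 0) \<noteq> 0"
    unfolding lookup_det_Xi_matrix using sum.not_neutral_contains_not_neutral by blast
  then have f: "label_sum \<psi> f = g" "monomial_of f = m" "det (select_columns A2 f) \<noteq> 0"
    by (auto split: if_splits)
  then have "inj f"
    using det_select_columns_eq_0 by blast
  with f m show "\<exists>f. inj f \<and> label_sum \<psi> f = g \<and> det (select_columns A1 f) \<noteq> 0 \<and> det (select_columns A2 f) \<noteq> 0"
    using lookup_det_Xi_matrix_monomial[OF \<open>inj f\<close>, of A1 A2 \<psi> g] by auto
next
  assume "\<exists>f. inj f \<and> label_sum \<psi> f = g \<and> det (select_columns A1 f) \<noteq> 0 \<and> det (select_columns A2 f) \<noteq> 0"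
  then obtain f where "inj f" "label_sum \<psi> f = g" "det (select_columns A1 f) \<noteq> 0" "det (select_columns A2 f) \<noteq> 0"
    by blast
  then have "Poly_Mapping.lookup (Poly_Mapping.lookup (det (Xi_matrix A1 A2 \<psi>)) g) (monomial_of f) \<noteq> 0"
    by (simp add: lookup_det_Xi_matrix_monomial)
  then show "Poly_Mapping.lookup (det (Xi_matrix A1 A2 \<psi>)) g \<noteq> 0"
    by auto
qed

lemma ex_mem_iff_ex_inj_range:
  fixes S :: "'e set set"
  assumes "\<forall>B\<in>S. card B = CARD('r::finite)"
  shows "(\<exists>B\<in>S. P B) \<longleftrightarrow> (\<exists>f :: 'r \<Rightarrow> 'e. inj f \<and> range f \<in> S \<and> P (range f))"
proof
  assume "\<exists>B\<in>S. P B"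
  then obtain B where "B \<in> S" "P B"
    by blast
  moreover have "card B = CARD('r)"
    using \<open>B \<in> S\<close> assms by blast
  then have "finite B"
    by (simp add: card_ge_0_finite)
  then obtain f :: "'r \<Rightarrow> 'e" where "bij_betw f UNIV B"
    using \<open>card B = CARD('r)\<close> finite_same_card_bij[of "UNIV :: 'r set" B] by auto
  ultimately show "\<exists>f :: 'r \<Rightarrow> 'e. inj f \<and> range f \<in> S \<and> P (range f)"
    by (auto simp: bij_betw_def)
qed blast

theorem lemma4p2:
  fixes A1 A2 :: "'a::field ^ 'e::finite ^ 'r::finite"
    and M1 M2 :: "'e set set"
    and \<psi> :: "'e \<Rightarrow> 'g::{ab_group_add, finite}"
    and g :: 'g
  assumes "matroid_bases M1" and "matroid_bases M2"
    and "matroid_has_rank M1 CARD('r)" and "matroid_has_rank M2 CARD('r)"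
    and "represents A1 M1" and "represents A2 M2"
  shows "Poly_Mapping.lookup (det (Xi_matrix A1 A2 \<psi>)) g \<noteq> 0 \<longleftrightarrow>
         (\<exists>B. B \<in> M1 \<and> B \<in> M2 \<and> (\<Sum>j\<in>B. \<psi> j) = g)"
proof -
  have bases_iff_dets: "range f \<in> M1 \<and> range f \<in> M2 \<longleftrightarrow>
      det (select_columns A1 f) \<noteq> 0 \<and> det (select_columns A2 f) \<noteq> 0" if "inj f" for f :: "'r \<Rightarrow> 'e"
    using assms(5,6) det_select_columns_neq_0_iff_column_basis[OF that, of A1]
      det_select_columns_neq_0_iff_column_basis[OF that, of A2]
    by (simp add: represents_def)
  have "(\<exists>B. B \<in> M1 \<and> B \<in> M2 \<and> (\<Sum>j\<in>B. \<psi> j) = g) \<longleftrightarrow>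
      (\<exists>f :: 'r \<Rightarrow> 'e. inj f \<and> range f \<in> M1 \<and> range f \<in> M2 \<and> label_sum \<psi> f = g)"
    using assms(3) ex_mem_iff_ex_inj_range[where 'r = 'r, of M1 "\<lambda>B. B \<in> M2 \<and> (\<Sum>j\<in>B. \<psi> j) = g"]
    by (auto simp: matroid_has_rank_def label_sum_inj)
  then show ?thesis
    using bases_iff_dets by (auto simp: lookup_det_Xi_matrix_neq_0_iff)
qed

end
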